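(* Let $V:S^1\to\mathbb R$ be continuous and odd, $D>0$, and let $f\ge0$ be a ($\mathcal C^2$) stationary solution of (TP) with $\int_{S^1}f=1$. Then $f$ satisfies $D f'=-(V*f)f$ on $S^1$. With $C=\max V/D$, for all $\theta_1,\theta_2\in S^1$, $$f(\theta_1)e^{-C|\theta_1-\theta_2|}\le f(\theta_2)\le f(\theta_1)e^{C|\theta_1-\theta_2|},$$ where $|\theta_1-\theta_2|\le\tfrac12$ is the distance on $S^1$. Consequently $\max f/\min f\le e^{C/2}$, $\max f\le e^{C/2}$ and $\min f\ge e^{-C/2}$. If moreover $V\in\mathcal C^1$, then at any maximum point $\theta_{\max}$ of $f$, $f''(\theta_{\max})\ge-\frac{\max V'}{D}f(\theta_{\max})$, and at any minimum point $\theta_{\min}$, $f''(\theta_{\min})\le-\frac{\min V'}{D}f(\theta_{\min})$.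
   Context: $S^1=\mathbb R/\mathbb Z$; $(V*f)(\theta)=\int_{S^1}V(\theta-\psi)f(\psi)d\psi$. Equation (TP): $\partial_tf=D\partial_\theta^2f+\partial_\theta((V*f)f)$. A stationary solution is a time-independent solution, i.e. $Df''+((V*f)f)'=0$. *)

theory Defs
  imports "HOL-Analysis.Analysis"
begin

text \<open>Functions on S^1 = R/Z are represented as 1-periodic functions on the reals.\<close>

definition periodic1 :: "(real \<Rightarrow> real) \<Rightarrow> bool" where
  "periodic1 g \<longleftrightarrow> (\<forall>x. g (x + 1) = g x)"

definition s1_conv :: "(real \<Rightarrow> real) \<Rightarrow> (real \<Rightarrow> real) \<Rightarrow> real \<Rightarrow> real" where
  "s1_conv V f \<theta> = integral {0..1} (\<lambda>\<psi>. V (\<theta> - \<psi>) * f \<psi>)"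

definition s1_dist :: "real \<Rightarrow> real \<Rightarrow> real" where
  "s1_dist x y = \<bar>(x - y) - of_int (round (x - y))\<bar>"

end

theory Submission
  imports Defs
begin

(* 1. Flux.  D f' + (V*f) f has zero derivative, hence is a constant c.  Integrating
      over one period, the integral of f' vanishes by periodicity and the integral of
      (V*f) f vanishes because V is odd (the kernel V(x - y) f x f y is antisymmetric).
      Hence c = 0, i.e.  D f' = -(V*f) f.
   2. Harnack.  As V*f is a weighted average of values of V with weights f of mass 1,
      |V*f| <= max V, so |f'| <= C f with C = max V / D.  A Gronwall argument gives
      f t <= f s exp (C |t - s|), and periodicity replaces |t - s| by the distance on
      the circle, which is at most 1/2.  With min f <= 1 <= max f this yields the
      bounds on max f, min f and their ratio.
   3. Second derivative.  At a critical point of f with f > 0 the flux identity forces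
      (V*f) = 0, so f'' is the limit of -((V*f)(x+h) - (V*f)(x))/h * f(x+h) / D; by the
      mean value theorem these difference quotients lie between min V' and max V'. *)

subsection \<open>Continuous 1-periodic functions\<close>

lemma periodic1_shift_int:
  assumes "periodic1 g"
  shows "g (x + of_int n) = g x"
proof (induction n rule: int_induct[where k = 0])
  case base
  then show ?case by simp
next
  case (step1 i)
  have "g (x + of_int (i + 1)) = g ((x + of_int i) + 1)" by (simp add: add.assoc)
  then show ?case using step1 assms by (simp add: periodic1_def)
next
  case (step2 i)
  have "g (x + of_int (i - 1)) = g ((x + of_int (i - 1)) + 1)"
    using assms unfolding periodic1_def by metis
  also have "\<dots> = g (x + of_int i)" by simp
  finally show ?case using step2 by simp
qed

lemma periodic1_range:
  assumes "periodic1 g"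
  shows "range g = g ` {0..1}"
proof
  show "range g \<subseteq> g ` {0..1}"
  proof
    fix y assume "y \<in> range g"
    then obtain x where y: "y = g x" by auto
    have "g x = g (frac x + of_int \<lfloor>x\<rfloor>)" by (simp add: frac_def)
    also have "\<dots> = g (frac x)" by (rule periodic1_shift_int[OF assms])
    finally show "y \<in> g ` {0..1}"
      using y frac_lt_1[of x] frac_ge_0[of x] by force
  qed
qed auto

lemma periodic1_compact_range:
  assumes "periodic1 g" "continuous_on UNIV g"
  shows "compact (range g)"
proof -
  have "continuous_on {0..1} g" using assms(2) continuous_on_subset by blast
  then have "compact (g ` {0..1})" by (intro compact_continuous_image) auto
  then show ?thesis using periodic1_range[OF assms(1)] by simp
qed

lemma periodic1_bdd:
  assumes "periodic1 g" "continuous_on UNIV g"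
  shows "bdd_above (range g)" "bdd_below (range g)"
  using compact_imp_bounded[OF periodic1_compact_range[OF assms]]
  by (auto intro: bounded_imp_bdd_above bounded_imp_bdd_below)

lemma periodic1_attains_max:
  assumes "periodic1 g" "continuous_on UNIV g"
  obtains x where "\<And>y. g y \<le> g x"
  using compact_attains_sup[OF periodic1_compact_range[OF assms]] by auto

lemma periodic1_attains_min:
  assumes "periodic1 g" "continuous_on UNIV g"
  obtains x where "\<And>y. g x \<le> g y"
  using compact_attains_inf[OF periodic1_compact_range[OF assms]] by auto

lemma periodic1_deriv:
  assumes "periodic1 g" "\<And>x. (g has_real_derivative g' x) (at x)"
  shows "periodic1 g'"
  unfolding periodic1_def
proof
  fix x
  have "((\<lambda>y. g (y + 1)) has_real_derivative g' (x + 1)) (at x)"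
    using assms(2)[of "x + 1"] DERIV_shift by blast
  moreover have "(\<lambda>y. g (y + 1)) = g" using assms(1) unfolding periodic1_def by auto
  ultimately show "g' (x + 1) = g' x" using assms(2)[of x] DERIV_unique by auto
qed

lemma periodic1_integral_deriv:
  assumes "periodic1 g" "\<And>x. (g has_real_derivative g' x) (at x)"
  shows "(g' has_integral 0) {0..1}"
proof -
  have "(g' has_integral (g 1 - g 0)) {0..1}"
    by (rule fundamental_theorem_of_calculus)
       (auto simp: has_real_derivative_iff_has_vector_derivative[symmetric]
             intro: DERIV_subset[OF assms(2)])
  moreover have "g 1 = g 0" using assms(1) unfolding periodic1_def by (metis add_0)
  ultimately show ?thesis by simp
qed

lemma s1_dist_le_half: "s1_dist x y \<le> 1 / 2"
  unfolding s1_dist_def using of_int_round_abs_le by (simp add: abs_minus_commute)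

subsection \<open>Weighted averages and the convolution\<close>

lemma weighted_average_bounds:
  fixes q w :: "real \<Rightarrow> real"
  assumes qw_int: "(\<lambda>x. q x * w x) integrable_on S" and w_int: "w integrable_on S"
    and w_nonneg: "\<And>x. x \<in> S \<Longrightarrow> w x \<ge> 0" and w_mass: "integral S w = 1"
    and q_bounds: "\<And>x. x \<in> S \<Longrightarrow> a \<le> q x \<and> q x \<le> b"
  shows "a \<le> integral S (\<lambda>x. q x * w x) \<and> integral S (\<lambda>x. q x * w x) \<le> b"
proof
  have "integral S (\<lambda>x. a * w x) \<le> integral S (\<lambda>x. q x * w x)"
    by (rule integral_le[OF integrable_on_mult_right[OF w_int] qw_int])
       (simp add: q_bounds w_nonneg mult_right_mono)
  then show "a \<le> integral S (\<lambda>x. q x * w x)" using w_mass by simp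
  have "integral S (\<lambda>x. q x * w x) \<le> integral S (\<lambda>x. b * w x)"
    by (rule integral_le[OF qw_int integrable_on_mult_right[OF w_int]])
       (simp add: q_bounds w_nonneg mult_right_mono)
  then show "integral S (\<lambda>x. q x * w x) \<le> b" using w_mass by simp
qed

lemma conv_integrand_integrable:
  fixes V f :: "real \<Rightarrow> real"
  assumes "continuous_on UNIV V" "continuous_on UNIV f"
  shows "(\<lambda>\<psi>. V (\<theta> - \<psi>) * f \<psi>) integrable_on {0..1}"
proof -
  have "continuous_on UNIV (\<lambda>\<psi>. V (\<theta> - \<psi>) * f \<psi>)"
    by (intro continuous_on_mult assms(2) continuous_on_compose2[OF assms(1)])
       (auto intro!: continuous_intros)
  then show ?thesis using continuous_on_subset integrable_continuous_interval by blast
qed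

text \<open>For odd V the kernel V (x - y) f x f y is antisymmetric, so the total flux
  of the convolution against f vanishes.\<close>
lemma conv_odd_integral_zero:
  assumes V_cont: "continuous_on UNIV V" and V_odd: "\<And>x. V (- x) = - V x"
    and f_cont: "continuous_on UNIV f"
  shows "integral {0..1} (\<lambda>x. s1_conv V f x * f x) = 0"
proof -
  define F where "F x y = V (x - y) * f y * f x" for x y
  have "continuous_on UNIV (\<lambda>p::real \<times> real. V (fst p - snd p) * f (snd p) * f (fst p))"
    by (intro continuous_on_mult continuous_on_compose2[OF f_cont]
          continuous_on_compose2[OF V_cont]) (auto intro!: continuous_intros)
  then have F_cont: "continuous_on (cbox (0, 0) (1, 1)) (\<lambda>(x, y). F x y)"
    unfolding F_def case_prod_beta using continuous_on_subset by blast
  have F_antisym: "(\<lambda>x. F x y) = (\<lambda>x. - F y x)" for y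
  proof
    fix x
    have "V (x - y) = - V (y - x)" using V_odd[of "y - x"] by simp
    then show "F x y = - F y x" unfolding F_def by simp
  qed
  have "integral {0..1} (\<lambda>x. integral {0..1} (F x))
      = integral {0..1} (\<lambda>y. integral {0..1} (\<lambda>x. - F y x))"
    using integral_swap_continuous[OF F_cont] by (simp only: cbox_interval F_antisym)
  also have "\<dots> = - integral {0..1} (\<lambda>y. integral {0..1} (F y))" by simp
  finally have "integral {0..1} (\<lambda>x. integral {0..1} (F x)) = 0" by simp
  moreover have "s1_conv V f x * f x = integral {0..1} (F x)" for x
    unfolding s1_conv_def F_def by simp
  ultimately show ?thesis by simp
qed

lemma conv_odd_bound:
  assumes V_cont: "continuous_on UNIV V" and V_per: "periodic1 V"
    and V_odd: "\<And>x. V (- x) = - V x" and f_cont: "continuous_on UNIV f"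
    and f_nonneg: "\<And>x. f x \<ge> 0" and f_mass: "integral {0..1} f = 1"
  shows "\<bar>s1_conv V f \<theta>\<bar> \<le> Sup (range V)"
proof -
  have V_le: "V x \<le> Sup (range V)" for x
    using periodic1_bdd[OF V_per V_cont] by (simp add: cSup_upper)
  have "- Sup (range V) \<le> V x" for x using V_le[of "- x"] V_odd[of x] by simp
  then have "- Sup (range V) \<le> s1_conv V f \<theta> \<and> s1_conv V f \<theta> \<le> Sup (range V)"
    unfolding s1_conv_def
    using f_cont V_le continuous_on_subset integrable_continuous_interval
    by (intro weighted_average_bounds conv_integrand_integrable V_cont f_nonneg f_mass) blast+
  then show ?thesis by linarith
qed

subsection \<open>The flux identity\<close>

text \<open>Integrating the stationary equation once: the flux D f' + (V*f) f is constant,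
  and the constant is zero since both f' and (V*f) f have zero mean.\<close>
lemma stationary_flux_zero:
  fixes V f f' f'' :: "real \<Rightarrow> real"
  assumes V_cont: "continuous_on UNIV V" and V_odd: "\<And>x. V (- x) = - V x"
    and f_per: "periodic1 f"
    and f_deriv: "\<And>x. (f has_real_derivative f' x) (at x)"
    and f'_deriv: "\<And>x. (f' has_real_derivative f'' x) (at x)"
    and stationary: "\<And>x. ((\<lambda>x. s1_conv V f x * f x) has_real_derivative
                             (- (D * f'' x))) (at x)"
  shows "D * f' \<theta> = - (s1_conv V f \<theta> * f \<theta>)"
proof -
  define flux where "flux x = D * f' x + s1_conv V f x * f x" for x
  have "(flux has_real_derivative 0) (at x)" for x
    using DERIV_add[OF DERIV_cmult[OF f'_deriv] stationary, of D x]
    unfolding flux_def[abs_def] by simp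
  then obtain c where flux_const: "\<And>x. flux x = c" using DERIV_isconst_all by blast
  have f_cont: "continuous_on UNIV f"
    by (intro continuous_at_imp_continuous_on ballI DERIV_isCont[OF f_deriv])
  have "(\<lambda>x. s1_conv V f x * f x) = (\<lambda>x. c - D * f' x)"
    using flux_const unfolding flux_def by (force simp: algebra_simps)
  moreover have "((\<lambda>x. c - D * f' x) has_integral c) {0..1}"
    using has_integral_diff[OF has_integral_const_real[of c 0 1]
        has_integral_mult_right[OF periodic1_integral_deriv[OF f_per f_deriv], of D]]
    by simp
  ultimately have "c = 0"
    using conv_odd_integral_zero[OF V_cont V_odd f_cont] by (simp add: integral_unique)
  then show ?thesis using flux_const[of \<theta>] unfolding flux_def by simp
qed

subsection \<open>Harnack inequality\<close>

lemma exp_growth_forward: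
  fixes u u' :: "real \<Rightarrow> real"
  assumes u_deriv: "\<And>x. (u has_real_derivative u' x) (at x)"
    and u'_le: "\<And>x. u' x \<le> C * u x" and "s \<le> t"
  shows "u t \<le> u s * exp (C * (t - s))"
proof -
  have "u t * exp (- C * t) \<le> u s * exp (- C * s)"
  proof (rule DERIV_nonpos_imp_nonincreasing[OF \<open>s \<le> t\<close>])
    fix x
    have "((\<lambda>x. u x * exp (- C * x)) has_real_derivative
        (u' x - C * u x) * exp (- C * x)) (at x)"
      by (auto intro!: derivative_eq_intros u_deriv simp: algebra_simps)
    moreover have "(u' x - C * u x) * exp (- C * x) \<le> 0"
      using u'_le[of x] by (simp add: mult_nonpos_nonneg)
    ultimately show "\<exists>y. ((\<lambda>x. u x * exp (- C * x)) has_real_derivative y) (at x) \<and> y \<le> 0"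
      by blast
  qed
  then have "u t * exp (- C * t) * exp (C * t) \<le> u s * exp (- C * s) * exp (C * t)"
    by (rule mult_right_mono) simp
  then show ?thesis by (simp add: mult.assoc algebra_simps flip: exp_add)
qed

lemma exp_growth_bound:
  fixes u u' :: "real \<Rightarrow> real"
  assumes u_deriv: "\<And>x. (u has_real_derivative u' x) (at x)"
    and u'_bound: "\<And>x. \<bar>u' x\<bar> \<le> C * u x"
  shows "u t \<le> u s * exp (C * \<bar>t - s\<bar>)"
proof (cases "s \<le> t")
  case True
  have "u' x \<le> C * u x" for x using u'_bound[of x] by simp
  then show ?thesis using exp_growth_forward[OF u_deriv _ True] True by simp
next
  case False
  have mirror_deriv: "((\<lambda>x. u (- x)) has_real_derivative - u' (- x)) (at x)" for x
    using u_deriv[of "- x"] DERIV_mirror by blast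
  have mirror_bound: "- u' (- x) \<le> C * u (- x)" for x using u'_bound[of "- x"] by simp
  have "u (- (- t)) \<le> u (- (- s)) * exp (C * (- t - - s))"
    by (rule exp_growth_forward[OF mirror_deriv mirror_bound]) (use False in simp)
  then show ?thesis using False by simp
qed

lemma periodic1_harnack:
  assumes u_per: "periodic1 u" and growth: "\<And>s t. u t \<le> u s * exp (C * \<bar>t - s\<bar>)"
  shows "u \<theta>1 * exp (- C * s1_dist \<theta>1 \<theta>2) \<le> u \<theta>2
    \<and> u \<theta>2 \<le> u \<theta>1 * exp (C * s1_dist \<theta>1 \<theta>2)"
proof
  define t where "t = \<theta>2 + of_int (round (\<theta>1 - \<theta>2))"
  have u_t: "u t = u \<theta>2" unfolding t_def by (rule periodic1_shift_int[OF u_per])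
  have dist_t: "\<bar>t - \<theta>1\<bar> = s1_dist \<theta>1 \<theta>2" unfolding t_def s1_dist_def by linarith
  show "u \<theta>2 \<le> u \<theta>1 * exp (C * s1_dist \<theta>1 \<theta>2)" using growth[of t \<theta>1] u_t dist_t by simp
  have "u \<theta>1 \<le> u \<theta>2 * exp (C * s1_dist \<theta>1 \<theta>2)"
    using growth[of \<theta>1 t] u_t dist_t by (simp add: abs_minus_commute)
  then have "u \<theta>1 * exp (- C * s1_dist \<theta>1 \<theta>2)
      \<le> u \<theta>2 * exp (C * s1_dist \<theta>1 \<theta>2) * exp (- C * s1_dist \<theta>1 \<theta>2)"
    by (rule mult_right_mono) simp
  then show "u \<theta>1 * exp (- C * s1_dist \<theta>1 \<theta>2) \<le> u \<theta>2"
    by (simp add: mult.assoc flip: exp_add)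
qed

lemma harnack_positive:
  assumes u_nonneg: "\<And>x. u x \<ge> 0" and u_mass: "integral {0..1} u = 1"
    and harnack: "\<And>x y. u y \<le> u x * exp (C * s1_dist x y)"
  shows "u x > 0"
proof (rule ccontr)
  assume "\<not> u x > 0"
  then have "u x = 0" using u_nonneg[of x] by simp
  then have "u y \<le> 0" for y using harnack[where x = x and y = y] by simp
  then have "u = (\<lambda>_. 0)" using u_nonneg by (intro ext antisym)
  then show False using u_mass by simp
qed

lemma harnack_extrema:
  assumes u_per: "periodic1 u" and u_cont: "continuous_on UNIV u"
    and u_nonneg: "\<And>x. u x \<ge> 0" and u_mass: "integral {0..1} u = 1" and "C \<ge> 0"
    and harnack: "\<And>x y. u y \<le> u x * exp (C * s1_dist x y)"
  shows "Sup (range u) / Inf (range u) \<le> exp (C / 2)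
    \<and> Sup (range u) \<le> exp (C / 2) \<and> Inf (range u) \<ge> exp (- C / 2)"
proof -
  obtain xM where xM: "\<And>y. u y \<le> u xM" using periodic1_attains_max[OF u_per u_cont] by blast
  obtain xm where xm: "\<And>y. u xm \<le> u y" using periodic1_attains_min[OF u_per u_cont] by blast
  have Sup_u: "Sup (range u) = u xM" by (rule cSup_eq_maximum) (auto intro: xM)
  have Inf_u: "Inf (range u) = u xm" by (rule cInf_eq_minimum) (auto intro: xm)
  have u_int: "u integrable_on {0..1}"
    using u_cont continuous_on_subset integrable_continuous_interval by blast
  have "integral {0..1} (\<lambda>_::real. u xm) \<le> integral {0..1} u"
    by (rule integral_le[OF integrable_const_ivl u_int]) (simp add: xm)
  then have min_le: "u xm \<le> 1" using u_mass by simp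
  have "integral {0..1} u \<le> integral {0..1} (\<lambda>_::real. u xM)"
    by (rule integral_le[OF u_int integrable_const_ivl]) (simp add: xM)
  then have max_ge: "1 \<le> u xM" using u_mass by simp
  have "exp (C * s1_dist xm xM) \<le> exp (C / 2)"
    using mult_left_mono[OF s1_dist_le_half \<open>C \<ge> 0\<close>] by simp
  then have "u xm * exp (C * s1_dist xm xM) \<le> u xm * exp (C / 2)"
    by (rule mult_left_mono[OF _ u_nonneg])
  then have max_le: "u xM \<le> u xm * exp (C / 2)"
    using harnack[where x = xm and y = xM] by linarith
  have min_pos: "u xm > 0" by (rule harnack_positive[OF u_nonneg u_mass harnack])
  have "exp (- C / 2) \<le> u xm * exp (C / 2) * exp (- C / 2)"
    using mult_right_mono[of 1 "u xm * exp (C / 2)" "exp (- C / 2)"] max_ge max_le by simp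
  then have min_ge: "exp (- C / 2) \<le> u xm" by (simp add: mult.assoc flip: exp_add)
  have "u xm * exp (C / 2) \<le> exp (C / 2)"
    using mult_right_mono[OF min_le, of "exp (C / 2)"] by simp
  then have max_le_exp: "u xM \<le> exp (C / 2)" using max_le by linarith
  have "u xM / u xm \<le> exp (C / 2)"
    using pos_divide_le_eq[OF min_pos] max_le by (simp add: mult.commute)
  then show ?thesis unfolding Sup_u Inf_u using min_ge max_le_exp by simp
qed

text \<open>A stationary solution with zero flux satisfies the Harnack inequality with
  constant max V / D, because |f'| = |V*f| f / D \<le> (max V / D) f.\<close>
lemma stationary_harnack:
  fixes V f :: "real \<Rightarrow> real"
  assumes V_cont: "continuous_on UNIV V" and V_per: "periodic1 V"
    and V_odd: "\<And>x. V (- x) = - V x" and "D > 0" and f_per: "periodic1 f"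
    and f_deriv: "\<And>x. (f has_real_derivative deriv f x) (at x)"
    and f_nonneg: "\<And>x. f x \<ge> 0" and f_mass: "integral {0..1} f = 1"
    and flux: "\<And>x. D * deriv f x = - (s1_conv V f x * f x)"
  shows "f \<theta>1 * exp (- (Sup (range V) / D) * s1_dist \<theta>1 \<theta>2) \<le> f \<theta>2
    \<and> f \<theta>2 \<le> f \<theta>1 * exp (Sup (range V) / D * s1_dist \<theta>1 \<theta>2)"
proof (intro periodic1_harnack[OF f_per] exp_growth_bound[OF f_deriv])
  fix x
  have f_cont: "continuous_on UNIV f"
    by (intro continuous_at_imp_continuous_on ballI DERIV_isCont[OF f_deriv])
  have "deriv f x = - (s1_conv V f x * f x) / D"
    using flux[of x] \<open>D > 0\<close> by (simp add: field_simps)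
  then have "\<bar>deriv f x\<bar> = \<bar>s1_conv V f x\<bar> * f x / D"
    using f_nonneg[of x] \<open>D > 0\<close> by (simp add: abs_mult)
  also have "\<dots> \<le> Sup (range V) * f x / D"
    using conv_odd_bound[OF V_cont V_per V_odd f_cont f_nonneg f_mass, of x] f_nonneg[of x] \<open>D > 0\<close>
    by (simp add: divide_right_mono mult_right_mono)
  finally show "\<bar>deriv f x\<bar> \<le> Sup (range V) / D * f x" by simp
qed

subsection \<open>Second derivative at critical points\<close>

lemma difference_quotient_bounds:
  fixes V V' :: "real \<Rightarrow> real"
  assumes V_deriv: "\<And>x. (V has_real_derivative V' x) (at x)"
    and V'_bounds: "\<And>x. a \<le> V' x \<and> V' x \<le> b" and "h \<noteq> 0"
  shows "a \<le> (V (x + h) - V x) / h \<and> (V (x + h) - V x) / h \<le> b"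
proof -
  obtain z where "V (x + h) - V x = h * V' z"
  proof (cases "h > 0")
    case True
    then obtain z where "V (x + h) - V x = (x + h - x) * V' z"
      using MVT2[of x "x + h" V V'] V_deriv by auto
    then show thesis using that[of z] by simp
  next
    case False
    then have "x + h < x" using \<open>h \<noteq> 0\<close> by simp
    then obtain z where "V x - V (x + h) = (x - (x + h)) * V' z"
      using MVT2[of "x + h" x V V'] V_deriv by blast
    then show thesis using that[of z] by (simp add: algebra_simps)
  qed
  then show ?thesis using V'_bounds[of z] \<open>h \<noteq> 0\<close> by simp
qed

lemma conv_difference_quotient_bounds:
  fixes V V' f :: "real \<Rightarrow> real"
  assumes V_deriv: "\<And>x. (V has_real_derivative V' x) (at x)"
    and V'_bounds: "\<And>x. a \<le> V' x \<and> V' x \<le> b"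
    and f_cont: "continuous_on UNIV f" and f_nonneg: "\<And>x. f x \<ge> 0"
    and f_mass: "integral {0..1} f = 1" and "h \<noteq> 0"
  shows "a \<le> (s1_conv V f (\<theta> + h) - s1_conv V f \<theta>) / h
    \<and> (s1_conv V f (\<theta> + h) - s1_conv V f \<theta>) / h \<le> b"
proof -
  define q where "q \<psi> = (V (\<theta> - \<psi> + h) - V (\<theta> - \<psi>)) / h" for \<psi>
  have V_cont: "continuous_on UNIV V"
    by (intro continuous_at_imp_continuous_on ballI DERIV_isCont[OF V_deriv])
  have "continuous_on UNIV (\<lambda>\<psi>. q \<psi> * f \<psi>)" unfolding q_def
    by (intro continuous_intros f_cont continuous_on_compose2[OF V_cont])
       (use \<open>h \<noteq> 0\<close> in auto)
  then have qf_int: "(\<lambda>\<psi>. q \<psi> * f \<psi>) integrable_on {0..1}"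
    using continuous_on_subset integrable_continuous_interval by blast
  have "s1_conv V f (\<theta> + h) - s1_conv V f \<theta>
      = integral {0..1} (\<lambda>\<psi>. V (\<theta> + h - \<psi>) * f \<psi> - V (\<theta> - \<psi>) * f \<psi>)"
    unfolding s1_conv_def
    by (simp add: integral_diff conv_integrand_integrable[OF V_cont f_cont])
  also have "(\<lambda>\<psi>. V (\<theta> + h - \<psi>) * f \<psi> - V (\<theta> - \<psi>) * f \<psi>) = (\<lambda>\<psi>. h * (q \<psi> * f \<psi>))"
    unfolding q_def using \<open>h \<noteq> 0\<close> by (auto simp: field_simps)
  finally have "(s1_conv V f (\<theta> + h) - s1_conv V f \<theta>) / h = integral {0..1} (\<lambda>\<psi>. q \<psi> * f \<psi>)"
    using \<open>h \<noteq> 0\<close> by simp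
  moreover have "a \<le> integral {0..1} (\<lambda>\<psi>. q \<psi> * f \<psi>)
      \<and> integral {0..1} (\<lambda>\<psi>. q \<psi> * f \<psi>) \<le> b"
  proof (rule weighted_average_bounds[OF qf_int _ f_nonneg f_mass])
    show "f integrable_on {0..1}"
      using f_cont continuous_on_subset integrable_continuous_interval by blast
    show "a \<le> q \<psi> \<and> q \<psi> \<le> b" for \<psi>
      unfolding q_def using difference_quotient_bounds[OF V_deriv V'_bounds \<open>h \<noteq> 0\<close>] by simp
  qed
  ultimately show ?thesis by simp
qed

lemma global_extremum_deriv_zero:
  fixes f :: "real \<Rightarrow> real"
  assumes f_deriv: "(f has_real_derivative f') (at \<theta>)"
    and extremum: "(\<forall>x. f x \<le> f \<theta>) \<or> (\<forall>x. f \<theta> \<le> f x)"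
  shows "f' = 0"
  using extremum
proof
  assume "\<forall>x. f x \<le> f \<theta>"
  then show ?thesis by (intro DERIV_local_max[OF f_deriv zero_less_one]) auto
next
  assume "\<forall>x. f \<theta> \<le> f x"
  then show ?thesis by (intro DERIV_local_min[OF f_deriv zero_less_one]) auto
qed

text \<open>If D f' = -g f, then at a critical point with f > 0 we have g = 0, and the
  bounds a, b on the difference quotients of g there bound f''.\<close>
lemma second_derivative_at_critical_point:
  fixes f f' g :: "real \<Rightarrow> real"
  assumes flux: "\<And>x. D * f' x = - (g x * f x)" and "D > 0"
    and f_cont: "isCont f \<theta>" and f_nonneg: "\<And>x. f x \<ge> 0"
    and f'_deriv: "(f' has_real_derivative f'') (at \<theta>)"
    and critical: "f' \<theta> = 0" and f_pos: "f \<theta> > 0"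
    and g_quot: "\<And>h. h \<noteq> 0 \<Longrightarrow> a \<le> (g (\<theta> + h) - g \<theta>) / h \<and> (g (\<theta> + h) - g \<theta>) / h \<le> b"
  shows "- (b / D) * f \<theta> \<le> f'' \<and> f'' \<le> - (a / D) * f \<theta>"
proof -
  have g_zero: "g \<theta> = 0" using flux[of \<theta>] critical f_pos by simp
  have quot: "(f' (\<theta> + h) - f' \<theta>) / h = - ((g (\<theta> + h) - g \<theta>) / h * f (\<theta> + h)) / D"
    if "h \<noteq> 0" for h
    using flux[of "\<theta> + h"] critical g_zero \<open>D > 0\<close> that by (simp add: field_simps)
  have lim_quot: "((\<lambda>h. (f' (\<theta> + h) - f' \<theta>) / h) \<longlongrightarrow> f'') (at 0)"
    using f'_deriv unfolding DERIV_def .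
  have lim_f: "((\<lambda>h. - (c / D) * f (\<theta> + h)) \<longlongrightarrow> - (c / D) * f \<theta>) (at 0)" for c
    using f_cont unfolding isCont_def by (intro tendsto_mult_left LIM_offset_zero)
  have near_0: "eventually P (at (0::real))" if "\<And>h. h \<noteq> 0 \<Longrightarrow> P h" for P
    unfolding eventually_at using that by (intro exI[of _ 1]) auto
  have "eventually (\<lambda>h. - (b / D) * f (\<theta> + h) \<le> (f' (\<theta> + h) - f' \<theta>) / h) (at 0)"
  proof (rule near_0)
    fix h :: real assume "h \<noteq> 0"
    then have "(g (\<theta> + h) - g \<theta>) / h * f (\<theta> + h) \<le> b * f (\<theta> + h)"
      by (rule mult_right_mono[OF conjunct2[OF g_quot] f_nonneg])
    then have "- (b * f (\<theta> + h)) / D \<le> - ((g (\<theta> + h) - g \<theta>) / h * f (\<theta> + h)) / D"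
      using \<open>D > 0\<close> by (intro divide_right_mono) auto
    then show "- (b / D) * f (\<theta> + h) \<le> (f' (\<theta> + h) - f' \<theta>) / h"
      unfolding quot[OF \<open>h \<noteq> 0\<close>] by simp
  qed
  moreover have "eventually (\<lambda>h. (f' (\<theta> + h) - f' \<theta>) / h \<le> - (a / D) * f (\<theta> + h)) (at 0)"
  proof (rule near_0)
    fix h :: real assume "h \<noteq> 0"
    then have "a * f (\<theta> + h) \<le> (g (\<theta> + h) - g \<theta>) / h * f (\<theta> + h)"
      by (rule mult_right_mono[OF conjunct1[OF g_quot] f_nonneg])
    then have "- ((g (\<theta> + h) - g \<theta>) / h * f (\<theta> + h)) / D \<le> - (a * f (\<theta> + h)) / D"
      using \<open>D > 0\<close> by (intro divide_right_mono) auto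
    then show "(f' (\<theta> + h) - f' \<theta>) / h \<le> - (a / D) * f (\<theta> + h)"
      unfolding quot[OF \<open>h \<noteq> 0\<close>] by simp
  qed
  ultimately show ?thesis
    using tendsto_le[OF _ lim_quot lim_f] tendsto_le[OF _ lim_f lim_quot] by simp
qed

lemma stationary_second_derivative_bounds:
  fixes V f :: "real \<Rightarrow> real"
  assumes V_per: "periodic1 V" and V_diff: "\<And>x. V differentiable (at x)"
    and V'_cont: "continuous_on UNIV (deriv V)" and "D > 0"
    and flux: "\<And>x. D * deriv f x = - (s1_conv V f x * f x)"
    and f_cont: "continuous_on UNIV f" and f_nonneg: "\<And>x. f x \<ge> 0"
    and f_mass: "integral {0..1} f = 1"
    and f'_deriv: "(deriv f has_real_derivative deriv (deriv f) \<theta>) (at \<theta>)"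
    and critical: "deriv f \<theta> = 0" and f_pos: "f \<theta> > 0"
  shows "- (Sup (range (deriv V)) / D) * f \<theta> \<le> deriv (deriv f) \<theta>
    \<and> deriv (deriv f) \<theta> \<le> - (Inf (range (deriv V)) / D) * f \<theta>"
proof (rule second_derivative_at_critical_point[OF flux \<open>D > 0\<close> _ f_nonneg f'_deriv critical f_pos])
  show "isCont f \<theta>" using f_cont by (simp add: continuous_on_eq_continuous_at)
  have V_deriv: "\<And>x. (V has_real_derivative deriv V x) (at x)"
    using V_diff DERIV_deriv_iff_real_differentiable by blast
  have V'_bdd: "bdd_above (range (deriv V))" "bdd_below (range (deriv V))"
    using periodic1_bdd[OF periodic1_deriv[OF V_per V_deriv] V'_cont] by auto
  show "Inf (range (deriv V)) \<le> (s1_conv V f (\<theta> + h) - s1_conv V f \<theta>) / h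
      \<and> (s1_conv V f (\<theta> + h) - s1_conv V f \<theta>) / h \<le> Sup (range (deriv V))"
    if "h \<noteq> 0" for h
  proof (rule conv_difference_quotient_bounds[OF V_deriv _ f_cont f_nonneg f_mass that])
    show "Inf (range (deriv V)) \<le> deriv V x \<and> deriv V x \<le> Sup (range (deriv V))" for x
      using V'_bdd by (auto intro: cInf_lower cSup_upper)
  qed
qed

theorem mainTheorem10:
  fixes V f :: "real \<Rightarrow> real" and D :: real
  assumes V_cont: "continuous_on UNIV V"
    and V_per: "periodic1 V"
    and V_odd: "\<And>x. V (- x) = - V x"
    and D_pos: "D > 0"
    and f_per: "periodic1 f"
    and f_diff: "\<And>x. f differentiable (at x)"
    and f'_diff: "\<And>x. deriv f differentiable (at x)"
    and f''_cont: "continuous_on UNIV (deriv (deriv f))"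
    and f_nonneg: "\<And>x. f x \<ge> 0"
    and f_mass: "integral {0..1} f = 1"
    and stationary: "\<And>\<theta>. ((\<lambda>x. s1_conv V f x * f x) has_real_derivative
                              (- (D * deriv (deriv f) \<theta>))) (at \<theta>)"
  shows "(\<forall>\<theta>. D * deriv f \<theta> = - (s1_conv V f \<theta> * f \<theta>))
    \<and> (let C = Sup (range V) / D in
        (\<forall>\<theta>1 \<theta>2. f \<theta>1 * exp (- C * s1_dist \<theta>1 \<theta>2) \<le> f \<theta>2
                 \<and> f \<theta>2 \<le> f \<theta>1 * exp (C * s1_dist \<theta>1 \<theta>2))
        \<and> Sup (range f) / Inf (range f) \<le> exp (C / 2)
        \<and> Sup (range f) \<le> exp (C / 2)
        \<and> Inf (range f) \<ge> exp (- C / 2))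
    \<and> ((\<forall>x. V differentiable (at x)) \<and> continuous_on UNIV (deriv V) \<longrightarrow>
        (\<forall>\<theta>. (\<forall>x. f x \<le> f \<theta>) \<longrightarrow>
              deriv (deriv f) \<theta> \<ge> - (Sup (range (deriv V)) / D) * f \<theta>)
      \<and> (\<forall>\<theta>. (\<forall>x. f \<theta> \<le> f x) \<longrightarrow>
              deriv (deriv f) \<theta> \<le> - (Inf (range (deriv V)) / D) * f \<theta>))"
proof -
  have f_deriv: "\<And>x. (f has_real_derivative deriv f x) (at x)"
    using f_diff DERIV_deriv_iff_real_differentiable by blast
  have f'_deriv: "\<And>x. (deriv f has_real_derivative deriv (deriv f) x) (at x)"
    using f'_diff DERIV_deriv_iff_real_differentiable by blast
  have f_cont: "continuous_on UNIV f"
    by (intro continuous_at_imp_continuous_on ballI DERIV_isCont[OF f_deriv])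
  have flux: "\<And>\<theta>. D * deriv f \<theta> = - (s1_conv V f \<theta> * f \<theta>)"
    by (rule stationary_flux_zero[OF V_cont V_odd f_per f_deriv f'_deriv stationary])
  define C where "C = Sup (range V) / D"
  have "C \<ge> 0"
    using cSup_upper[OF _ periodic1_bdd(1)[OF V_per V_cont], of "V 0"] V_odd[of 0] D_pos
    unfolding C_def by simp
  have harnack: "\<And>\<theta>1 \<theta>2. f \<theta>1 * exp (- C * s1_dist \<theta>1 \<theta>2) \<le> f \<theta>2
      \<and> f \<theta>2 \<le> f \<theta>1 * exp (C * s1_dist \<theta>1 \<theta>2)"
    unfolding C_def
    by (rule stationary_harnack[OF V_cont V_per V_odd D_pos f_per f_deriv f_nonneg f_mass flux])
  have extrema: "Sup (range f) / Inf (range f) \<le> exp (C / 2)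
      \<and> Sup (range f) \<le> exp (C / 2) \<and> Inf (range f) \<ge> exp (- C / 2)"
    using harnack by (intro harnack_extrema[OF f_per f_cont f_nonneg f_mass \<open>C \<ge> 0\<close>]) blast
  have f_pos: "\<And>x. f x > 0"
    using harnack by (intro harnack_positive[OF f_nonneg f_mass]) blast
  note second = stationary_second_derivative_bounds[OF V_per _ _ D_pos flux f_cont f_nonneg
      f_mass f'_deriv global_extremum_deriv_zero[OF f_deriv] f_pos]
  have at_max: "deriv (deriv f) \<theta> \<ge> - (Sup (range (deriv V)) / D) * f \<theta>"
    if "(\<forall>x. V differentiable (at x)) \<and> continuous_on UNIV (deriv V)" "\<forall>x. f x \<le> f \<theta>" for \<theta>
    using second that by blast
  have at_min: "deriv (deriv f) \<theta> \<le> - (Inf (range (deriv V)) / D) * f \<theta>"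
    if "(\<forall>x. V differentiable (at x)) \<and> continuous_on UNIV (deriv V)" "\<forall>x. f \<theta> \<le> f x" for \<theta>
    using second that by blast
  show ?thesis
    unfolding Let_def C_def[symmetric] using flux harnack extrema at_max at_min by blast
qed

end
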